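(* Let $S\in\mathbb{R}_{\geq 0}^{[m]\times[N]}$ be a matrix with non-negative entries. Then \[\mathrm{rk}_+(S)=\min\{|\Gamma(\pi)| : \pi\in\mathrm{Prot}_+(S)\}.\]
   Context: $\mathrm{rk}_+(S)$ is the non-negative rank: the least $r$ such that $S=UW$ with $U\in\mathbb{R}_{\ge0}^{m\times r}$, $W\in\mathbb{R}_{\ge 0}^{r\times N}$. A Markovian protocol $\pi$ in $k\ge 1$ rounds between Alice (who receives an input $i\in[m]$) and Bob (who receives an input $j\in[N]$) is given by: finite sets $V_1,\dots,V_k$ of messages; a first speaker $D_1\in\{A,B\}$, the speakers alternating thereafter ($D_{t+1}\neq D_t$); for the first speaker an initial probability distribution $p^0_{D_1,z}$ on $V_1$ depending on his/her input $z$; for $1\le t\le k-1$, transition probabilities $p^{(t)}_{D_{t+1},z}(u_t,\cdot)$, a probability distribution on $V_{t+1}$ used by the party $D_{t+1}$ with input $z$ after receiving message $u_t$; and finally the party $D_{k+1}$ (the one who received $u_k$) claims an output $\omega\ge 0$ drawn from a distribution on $[0,\infty)$ depending only on his/her input and on $u_k$, with finite mean $\bar\omega_{D_{k+1},z}(u_k)$. (Protocols with either party as first speaker are allowed.) The average output on inputs $(i,j)$ is \[\mathbb{E}[\omega\mid i,j]=\sum_{(u_1,\dots,u_k)} p^0_{D_1,z_1}(u_1)\prod_{t=1}^{k-1}p^{(t)}_{D_{t+1},z_{t+1}}(u_t,u_{t+1})\,\bar\omega_{D_{k+1},z_{k+1}}(u_k),\] where $z_s=i$ if $D_s=A$ and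 $z_s=j$ if $D_s=B$. For $\gamma=(u_1,\dots,u_k)$, let $A_{i,\gamma}$ be the product of those factors in the summand for $\gamma$ belonging to Alice (i.e. depending on her input $i$) and $B_{\gamma,j}$ the product of the factors belonging to Bob, so the summand is $A_{i,\gamma}B_{\gamma,j}$. The protocol is correct for $S$ if for all $(i,j)$ the output is non-negative with probability $1$ and $\mathbb{E}[\omega\mid i,j]=S_{i,j}$; $\mathrm{Prot}_+(S)$ is the set of Markovian protocols correct for $S$. The width is $|\Gamma(\pi)|$, where $\Gamma(\pi)=\{\gamma\in V_1\times\cdots\times V_k : \exists i\in[m],\exists j\in[N],\ A_{i,\gamma}B_{\gamma,j}>0\}$. *)

theory Defs
  imports "HOL-Probability.Probability"
begin

text \<open>Matrices are functions nat => nat => real, only the entries with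
  row index < m and column index < N are relevant.\<close>

definition nonneg_rank :: "nat \<Rightarrow> nat \<Rightarrow> (nat \<Rightarrow> nat \<Rightarrow> real) \<Rightarrow> nat" where
  "nonneg_rank m N S = (LEAST r. \<exists>(U :: nat \<Rightarrow> nat \<Rightarrow> real) (W :: nat \<Rightarrow> nat \<Rightarrow> real).
      (\<forall>i<m. \<forall>l<r. U i l \<ge> 0) \<and> (\<forall>l<r. \<forall>j<N. W l j \<ge> 0) \<and>
      (\<forall>i<m. \<forall>j<N. S i j = (\<Sum>l<r. U i l * W l j)))"

text \<open>Messages are natural numbers;
  round t (1 \<le> t \<le> k) uses the finite message set V t. The speaker
  D_1 is Alice iff alice_first; speakers alternate. p0 z u is the initial
  distribution of the first speaker with input z; trans t z u v is
  p^(t)_{D_{t+1},z}(u,v) for 1 \<le> t \<le> k-1; out z u is the output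
  distribution (a probability measure on the reals concentrated on [0,\<infinity>))
  of the party D_{k+1} with input z after receiving u_k = u.\<close>

record protocol =
  rounds :: nat
  msgs :: "nat \<Rightarrow> nat set"
  alice_first :: bool
  p0 :: "nat \<Rightarrow> nat \<Rightarrow> real"
  trans :: "nat \<Rightarrow> nat \<Rightarrow> nat \<Rightarrow> nat \<Rightarrow> real"
  out :: "nat \<Rightarrow> nat \<Rightarrow> real measure"

text \<open>Is party D_{s+1} Alice? (s = 0, ..., k)\<close>
definition is_alice :: "protocol \<Rightarrow> nat \<Rightarrow> bool" where
  "is_alice \<pi> s = (alice_first \<pi> \<longleftrightarrow> even s)"

definition inputs :: "nat \<Rightarrow> nat \<Rightarrow> protocol \<Rightarrow> nat \<Rightarrow> nat set" where
  "inputs m N \<pi> s = (if is_alice \<pi> s then {..<m} else {..<N})"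

definition mean_out :: "protocol \<Rightarrow> nat \<Rightarrow> nat \<Rightarrow> real" where
  "mean_out \<pi> z u = integral\<^sup>L (out \<pi> z u) (\<lambda>x. x)"

definition well_formed :: "nat \<Rightarrow> nat \<Rightarrow> protocol \<Rightarrow> bool" where
  "well_formed m N \<pi> \<longleftrightarrow>
     rounds \<pi> \<ge> 1 \<and>
     (\<forall>t\<in>{1..rounds \<pi>}. finite (msgs \<pi> t)) \<and>
     (\<forall>z\<in>inputs m N \<pi> 0.
        (\<forall>u\<in>msgs \<pi> 1. p0 \<pi> z u \<ge> 0) \<and> (\<Sum>u\<in>msgs \<pi> 1. p0 \<pi> z u) = 1) \<and>
     (\<forall>t\<in>{1..rounds \<pi> - 1}. \<forall>z\<in>inputs m N \<pi> t. \<forall>u\<in>msgs \<pi> t.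
        (\<forall>v\<in>msgs \<pi> (t+1). trans \<pi> t z u v \<ge> 0) \<and>
        (\<Sum>v\<in>msgs \<pi> (t+1). trans \<pi> t z u v) = 1) \<and>
     (\<forall>z\<in>inputs m N \<pi> (rounds \<pi>). \<forall>u\<in>msgs \<pi> (rounds \<pi>).
        prob_space (out \<pi> z u) \<and> sets (out \<pi> z u) = sets borel \<and>
        (AE x in out \<pi> z u. x \<ge> 0) \<and> integrable (out \<pi> z u) (\<lambda>x. x))"

text \<open>Transcripts gamma = (u_1,...,u_k) as lists, gamma ! (t-1) = u_t.\<close>
definition transcripts :: "protocol \<Rightarrow> nat list set" where
  "transcripts \<pi> = {\<gamma>. length \<gamma> = rounds \<pi> \<and> (\<forall>t<rounds \<pi>. \<gamma> ! t \<in> msgs \<pi> (t+1))}"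

text \<open>The s-th factor (s = 0..k) of the summand for gamma, evaluated at input z
  of its owner D_{s+1}.\<close>
definition factor :: "protocol \<Rightarrow> nat \<Rightarrow> nat \<Rightarrow> nat list \<Rightarrow> real" where
  "factor \<pi> z s \<gamma> =
     (if s = 0 then p0 \<pi> z (\<gamma> ! 0)
      else if s < rounds \<pi> then trans \<pi> s z (\<gamma> ! (s - 1)) (\<gamma> ! s)
      else mean_out \<pi> z (\<gamma> ! (rounds \<pi> - 1)))"

definition A_part :: "protocol \<Rightarrow> nat \<Rightarrow> nat list \<Rightarrow> real" where
  "A_part \<pi> i \<gamma> = (\<Prod>s\<in>{s. s \<le> rounds \<pi> \<and> is_alice \<pi> s}. factor \<pi> i s \<gamma>)"

definition B_part :: "protocol \<Rightarrow> nat list \<Rightarrow> nat \<Rightarrow> real" where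
  "B_part \<pi> \<gamma> j = (\<Prod>s\<in>{s. s \<le> rounds \<pi> \<and> \<not> is_alice \<pi> s}. factor \<pi> j s \<gamma>)"

definition expected_output :: "protocol \<Rightarrow> nat \<Rightarrow> nat \<Rightarrow> real" where
  "expected_output \<pi> i j = (\<Sum>\<gamma>\<in>transcripts \<pi>. A_part \<pi> i \<gamma> * B_part \<pi> \<gamma> j)"

text \<open>Prot_+(S). Non-negativity of the output with probability 1 is
  part of well_formed (outputs are distributions on [0,\<infinity>)).\<close>
definition correct_for :: "nat \<Rightarrow> nat \<Rightarrow> (nat \<Rightarrow> nat \<Rightarrow> real) \<Rightarrow> protocol \<Rightarrow> bool" where
  "correct_for m N S \<pi> \<longleftrightarrow> well_formed m N \<pi> \<and>
     (\<forall>i<m. \<forall>j<N. expected_output \<pi> i j = S i j)"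

definition width :: "nat \<Rightarrow> nat \<Rightarrow> protocol \<Rightarrow> nat" where
  "width m N \<pi> = card {\<gamma>\<in>transcripts \<pi>. \<exists>i<m. \<exists>j<N. A_part \<pi> i \<gamma> * B_part \<pi> \<gamma> j > 0}"

end

theory Submission
  imports Defs
begin

(* The weights A_part i gamma * B_part gamma j of a correct protocol, restricted to the
   transcripts of positive weight, are a non-negative factorisation of S of inner size equal
   to the width; hence rk+(S) is at most the width of every correct protocol.
   Conversely, a non-negative factorisation S = U W of inner size r yields a one-round protocol
   of width at most r: with c above every row sum of U, Alice sends l < r with probability
   U i l / c, a dummy message r absorbs the remaining mass, and Bob outputs c * W l j
   (and 0 after the dummy message). *)

definition nonneg_factorization ::
    "nat \<Rightarrow> nat \<Rightarrow> (nat \<Rightarrow> nat \<Rightarrow> real) \<Rightarrow> nat \<Rightarrow> (nat \<Rightarrow> nat \<Rightarrow> real) \<Rightarrow> (nat \<Rightarrow> nat \<Rightarrow> real) \<Rightarrow> bool"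
  where "nonneg_factorization m N S r U W \<longleftrightarrow>
    (\<forall>i<m. \<forall>l<r. U i l \<ge> 0) \<and> (\<forall>l<r. \<forall>j<N. W l j \<ge> 0) \<and>
    (\<forall>i<m. \<forall>j<N. S i j = (\<Sum>l<r. U i l * W l j))"

lemma nonneg_rank_def':
  "nonneg_rank m N S = (LEAST r. \<exists>U W. nonneg_factorization m N S r U W)"
  unfolding nonneg_rank_def nonneg_factorization_def ..

lemma nonneg_factorization_nonneg_rank:
  assumes "\<forall>i<m. \<forall>j<N. S i j \<ge> 0"
  obtains U W where "nonneg_factorization m N S (nonneg_rank m N S) U W"
proof -
  have identity: "nonneg_factorization m N S m (\<lambda>i l. of_bool (i = l)) S"
    using assms unfolding nonneg_factorization_def by simp
  have "\<exists>U W. nonneg_factorization m N S (nonneg_rank m N S) U W"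
    unfolding nonneg_rank_def' by (rule LeastI_ex) (use identity in blast)
  with that show thesis by blast
qed

lemma nonneg_rank_le_card:
  fixes A :: "nat \<Rightarrow> 'a \<Rightarrow> real" and B :: "'a \<Rightarrow> nat \<Rightarrow> real"
  assumes "finite G"
    and "\<forall>i<m. \<forall>x\<in>G. A i x \<ge> 0" and "\<forall>x\<in>G. \<forall>j<N. B x j \<ge> 0"
    and "\<forall>i<m. \<forall>j<N. S i j = (\<Sum>x\<in>G. A i x * B x j)"
  shows "nonneg_rank m N S \<le> card G"
proof -
  obtain h where h: "bij_betw h {..<card G} G"
    using ex_bij_betw_nat_finite[OF \<open>finite G\<close>] by (auto simp: atLeast0LessThan)
  then have "h l \<in> G" if "l < card G" for l
    using that bij_betwE by blast
  moreover have "(\<Sum>x\<in>G. A i x * B x j) = (\<Sum>l<card G. A i (h l) * B (h l) j)" for i j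
    using sum.reindex_bij_betw[OF h, symmetric] by simp
  ultimately have "nonneg_factorization m N S (card G) (\<lambda>i l. A i (h l)) (\<lambda>l j. B (h l) j)"
    using assms unfolding nonneg_factorization_def by simp
  then show ?thesis
    unfolding nonneg_rank_def' by (blast intro: Least_le)
qed

lemma return_borel_mean:
  fixes x :: real
  shows "integrable (return borel x) (\<lambda>y. y)" and "integral\<^sup>L (return borel x) (\<lambda>y. y) = x"
proof -
  interpret prob_space "return borel x"
    by (simp add: prob_space_return)
  have "AE y in return borel x. y = x"
    by (simp add: AE_return)
  then show "integrable (return borel x) (\<lambda>y. y)"
    by (subst integrable_cong_AE[of _ _ "\<lambda>_. x"]) simp_all
  show "integral\<^sup>L (return borel x) (\<lambda>y. y) = x"
    by (simp add: integral_return)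
qed

lemma finite_transcripts:
  assumes "well_formed m N \<pi>"
  shows "finite (transcripts \<pi>)"
proof -
  let ?V = "\<Union>t\<in>{1..rounds \<pi>}. msgs \<pi> t"
  have "finite ?V"
    using assms unfolding well_formed_def by auto
  moreover have "transcripts \<pi> \<subseteq> {xs. set xs \<subseteq> ?V \<and> length xs = rounds \<pi>}"
    unfolding transcripts_def by (force simp: set_conv_nth)
  ultimately show ?thesis
    by (rule finite_subset[OF _ finite_lists_length_eq, rotated])
qed

lemma factor_nonneg:
  assumes wf: "well_formed m N \<pi>" and \<gamma>: "\<gamma> \<in> transcripts \<pi>"
    and "s \<le> rounds \<pi>" and z: "z \<in> inputs m N \<pi> s"
  shows "factor \<pi> z s \<gamma> \<ge> 0"
proof -
  have "rounds \<pi> \<ge> 1"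
    using wf unfolding well_formed_def by simp
  have msg: "\<gamma> ! t \<in> msgs \<pi> (t + 1)" if "t < rounds \<pi>" for t
    using \<gamma> that unfolding transcripts_def by simp
  consider "s = 0" | "0 < s" "s < rounds \<pi>" | "0 < s" "s = rounds \<pi>"
    using \<open>s \<le> rounds \<pi>\<close> by linarith
  then show ?thesis
  proof cases
    case 1
    then show ?thesis
      using wf z msg[of 0] \<open>rounds \<pi> \<ge> 1\<close> unfolding well_formed_def factor_def by simp
  next
    case 2
    then show ?thesis
      using wf z msg[of "s - 1"] msg[of s] unfolding well_formed_def factor_def by simp
  next
    case 3
    then have "AE x in out \<pi> z (\<gamma> ! (rounds \<pi> - 1)). x \<ge> 0"
      using wf z msg[of "rounds \<pi> - 1"] unfolding well_formed_def by simp
    then have "mean_out \<pi> z (\<gamma> ! (rounds \<pi> - 1)) \<ge> 0"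
      unfolding mean_out_def by (rule integral_nonneg_AE)
    then show ?thesis
      using 3 unfolding factor_def by simp
  qed
qed

lemma A_part_nonneg:
  assumes "well_formed m N \<pi>" "\<gamma> \<in> transcripts \<pi>" "i < m"
  shows "A_part \<pi> i \<gamma> \<ge> 0"
  unfolding A_part_def using assms by (auto intro!: prod_nonneg factor_nonneg simp: inputs_def)

lemma B_part_nonneg:
  assumes "well_formed m N \<pi>" "\<gamma> \<in> transcripts \<pi>" "j < N"
  shows "B_part \<pi> \<gamma> j \<ge> 0"
  unfolding B_part_def using assms by (auto intro!: prod_nonneg factor_nonneg simp: inputs_def)

definition active_transcripts :: "nat \<Rightarrow> nat \<Rightarrow> protocol \<Rightarrow> nat list set" where
  "active_transcripts m N \<pi> =
    {\<gamma>\<in>transcripts \<pi>. \<exists>i<m. \<exists>j<N. A_part \<pi> i \<gamma> * B_part \<pi> \<gamma> j > 0}"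

lemma width_eq_card_active_transcripts: "width m N \<pi> = card (active_transcripts m N \<pi>)"
  unfolding width_def active_transcripts_def ..

lemma expected_output_eq_sum_active_transcripts:
  assumes wf: "well_formed m N \<pi>" and "i < m" "j < N"
  shows "expected_output \<pi> i j = (\<Sum>\<gamma>\<in>active_transcripts m N \<pi>. A_part \<pi> i \<gamma> * B_part \<pi> \<gamma> j)"
  unfolding expected_output_def
proof (rule sum.mono_neutral_right)
  show "finite (transcripts \<pi>)"
    using wf by (rule finite_transcripts)
  show "active_transcripts m N \<pi> \<subseteq> transcripts \<pi>"
    unfolding active_transcripts_def by blast
  show "\<forall>\<gamma>\<in>transcripts \<pi> - active_transcripts m N \<pi>. A_part \<pi> i \<gamma> * B_part \<pi> \<gamma> j = 0"
    using assms A_part_nonneg[OF wf] B_part_nonneg[OF wf]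
    unfolding active_transcripts_def by (force intro: antisym mult_nonneg_nonneg)
qed

lemma nonneg_rank_le_width:
  assumes "correct_for m N S \<pi>"
  shows "nonneg_rank m N S \<le> width m N \<pi>"
proof -
  have wf: "well_formed m N \<pi>"
    using assms unfolding correct_for_def by simp
  have "active_transcripts m N \<pi> \<subseteq> transcripts \<pi>"
    unfolding active_transcripts_def by blast
  then show ?thesis
    unfolding width_eq_card_active_transcripts
    using assms finite_subset[OF _ finite_transcripts[OF wf]]
      A_part_nonneg[OF wf] B_part_nonneg[OF wf] expected_output_eq_sum_active_transcripts[OF wf]
    by (intro nonneg_rank_le_card[where A = "A_part \<pi>" and B = "B_part \<pi>"])
      (auto simp: correct_for_def)
qed

definition factorization_protocol ::
    "nat \<Rightarrow> (nat \<Rightarrow> nat \<Rightarrow> real) \<Rightarrow> (nat \<Rightarrow> nat \<Rightarrow> real) \<Rightarrow> real \<Rightarrow> protocol"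
  where "factorization_protocol r U W c =
    \<lparr>rounds = 1, msgs = (\<lambda>_. {..r}), alice_first = True,
     p0 = (\<lambda>i l. if l < r then U i l / c else 1 - (\<Sum>k<r. U i k) / c),
     trans = (\<lambda>_ _ _ _. 0),
     out = (\<lambda>j l. return borel (if l < r then c * W l j else 0))\<rparr>"

lemma transcripts_factorization_protocol:
  "transcripts (factorization_protocol r U W c) = (\<lambda>l. [l]) ` {..r}"
  unfolding transcripts_def factorization_protocol_def
  by (auto simp: length_Suc_conv)

lemma A_part_factorization_protocol:
  "A_part (factorization_protocol r U W c) i [l] =
    (if l < r then U i l / c else 1 - (\<Sum>k<r. U i k) / c)"
proof -
  have "{s. s \<le> 1 \<and> even s} = {0::nat}"
    by (auto simp: le_Suc_eq)
  then show ?thesis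
    unfolding A_part_def factor_def is_alice_def factorization_protocol_def by simp
qed

lemma B_part_factorization_protocol:
  "B_part (factorization_protocol r U W c) [l] j = (if l < r then c * W l j else 0)"
proof -
  have "{s. s \<le> 1 \<and> odd s} = {1::nat}"
    by (auto simp: le_Suc_eq)
  then show ?thesis
    unfolding B_part_def factor_def is_alice_def mean_out_def factorization_protocol_def
    by (simp add: return_borel_mean)
qed

lemma well_formed_factorization_protocol:
  assumes U: "\<forall>i<m. \<forall>l<r. U i l \<ge> 0" and W: "\<forall>l<r. \<forall>j<N. W l j \<ge> 0"
    and "c > 0" and row_sum: "\<forall>i<m. (\<Sum>l<r. U i l) \<le> c"
  shows "well_formed m N (factorization_protocol r U W c)"
proof -
  let ?\<pi> = "factorization_protocol r U W c"
  let ?y = "\<lambda>j l. if l < r then c * W l j else 0"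
  have protocol: "rounds ?\<pi> = 1" "msgs ?\<pi> t = {..r}" "out ?\<pi> j l = return borel (?y j l)"
    for t j l
    unfolding factorization_protocol_def by simp_all
  have inputs: "inputs m N ?\<pi> 0 = {..<m}" "inputs m N ?\<pi> 1 = {..<N}"
    unfolding inputs_def is_alice_def factorization_protocol_def by simp_all
  have "p0 ?\<pi> i l \<ge> 0" if "i < m" for i l
    using that U row_sum \<open>c > 0\<close> unfolding factorization_protocol_def by simp
  moreover have "(\<Sum>l\<le>r. p0 ?\<pi> i l) = 1" for i
    using \<open>c > 0\<close> unfolding factorization_protocol_def
    by (simp add: lessThan_Suc_atMost[symmetric] sum_divide_distrib)
  moreover have "?y j l \<ge> 0" if "j < N" for j l
    using that W \<open>c > 0\<close> by simp
  ultimately show ?thesis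
    unfolding well_formed_def protocol inputs
    by (auto simp: prob_space_return AE_return return_borel_mean)
qed

lemma expected_output_factorization_protocol:
  assumes "c \<noteq> 0"
  shows "expected_output (factorization_protocol r U W c) i j = (\<Sum>l<r. U i l * W l j)"
  using assms unfolding expected_output_def transcripts_factorization_protocol
  by (simp add: sum.reindex inj_on_def A_part_factorization_protocol B_part_factorization_protocol
      lessThan_Suc_atMost[symmetric])

lemma width_factorization_protocol_le: "width m N (factorization_protocol r U W c) \<le> r"
proof -
  have "active_transcripts m N (factorization_protocol r U W c) \<subseteq> (\<lambda>l. [l]) ` {..<r}"
    unfolding active_transcripts_def transcripts_factorization_protocol
    by (auto simp: B_part_factorization_protocol split: if_splits)
  then have "width m N (factorization_protocol r U W c) \<le> card ((\<lambda>l. [l]) ` {..<r})"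
    unfolding width_eq_card_active_transcripts by (simp add: card_mono)
  also have "\<dots> \<le> r"
    using card_image_le[of "{..<r}" "\<lambda>l. [l]"] by simp
  finally show ?thesis .
qed

lemma correct_protocol_of_nonneg_factorization:
  assumes "nonneg_factorization m N S r U W"
  shows "\<exists>\<pi>. correct_for m N S \<pi> \<and> width m N \<pi> \<le> r"
proof -
  have U: "\<forall>i<m. \<forall>l<r. U i l \<ge> 0"
    using assms unfolding nonneg_factorization_def by simp
  define c where "c = 1 + (\<Sum>i<m. \<Sum>l<r. U i l)"
  have "(\<Sum>l<r. U i l) \<le> (\<Sum>i<m. \<Sum>l<r. U i l)" if "i < m" for i
    using that U by (intro member_le_sum sum_nonneg) auto
  then have row_sum: "\<forall>i<m. (\<Sum>l<r. U i l) \<le> c"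
    unfolding c_def by (auto intro: add_increasing)
  have "c > 0"
    unfolding c_def using U by (intro add_pos_nonneg sum_nonneg) auto
  then have "correct_for m N S (factorization_protocol r U W c)"
    using assms well_formed_factorization_protocol[OF U _ _ row_sum]
    unfolding correct_for_def nonneg_factorization_def
    by (simp add: expected_output_factorization_protocol)
  then show ?thesis
    using width_factorization_protocol_le by blast
qed

theorem proposition1:
  fixes m N :: nat and S :: "nat \<Rightarrow> nat \<Rightarrow> real"
  assumes "\<forall>i<m. \<forall>j<N. S i j \<ge> 0"
  shows "(\<exists>\<pi>. correct_for m N S \<pi> \<and> width m N \<pi> = nonneg_rank m N S) \<and>
         (\<forall>\<pi>. correct_for m N S \<pi> \<longrightarrow> nonneg_rank m N S \<le> width m N \<pi>)"
proof
  show lower_bound: "\<forall>\<pi>. correct_for m N S \<pi> \<longrightarrow> nonneg_rank m N S \<le> width m N \<pi>"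
    using nonneg_rank_le_width by blast
  obtain U W where "nonneg_factorization m N S (nonneg_rank m N S) U W"
    using nonneg_factorization_nonneg_rank[OF assms] .
  then obtain \<pi> where "correct_for m N S \<pi>" "width m N \<pi> \<le> nonneg_rank m N S"
    using correct_protocol_of_nonneg_factorization by blast
  with lower_bound show "\<exists>\<pi>. correct_for m N S \<pi> \<and> width m N \<pi> = nonneg_rank m N S"
    using le_antisym by blast
qed

end
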